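(* Let $L$ be a positive integer and let $\{a_i(k)\}_{i\in\mathbb Z_L}$, $k\in\mathcal K=\mathbb Z_L$, be binary sequences. Let $s\ge2$ be an integer and $W(s)\ge0$ a number such that for all distinct keys $k_1,\ldots,k_s\in\mathcal K$ and all bits $b_1,\ldots,b_s$, $$|A_{b_1\ldots b_s}(k_1,\ldots,k_s)|\le \frac{L}{2^s}+W(s).$$ Let $0<\gamma<1$ with $\gamma L$ an integer, and set $L'=L\bigl(1+2^sW(s)/L\bigr)=L+2^sW(s)$, $\gamma'=\gamma\bigl(1+2^sW(s)/L\bigr)^{-1}$ (so $\gamma'L'=\gamma L$). Let $r$ be the integer with $P_s(r)\le\gamma'/2<P_s(r+1)$. Then for every $T\subset\mathbb Z_L$ with $|T|=\gamma L$, every $g:T\to\{0,1\}$ and every $s$ distinct keys $k_1,\ldots,k_s$, $$\min_{1\le i\le s}\bigl|\{j\in T: g(j)=a_j(k_i)\}\bigr|\le n_{\rm correct}(\gamma,\varepsilon):=L'\Bigl\{P_{s-1}(r)+\frac{s-r-1}{s}\bigl(\gamma'-2P_s(r)\bigr)\Bigr\},$$ where $\varepsilon=s/|\mathcal K|$. Consequently, fewer than $s$ keys $k$ satisfy $|\{j\in T:g(j)=a_j(k)\}|>n_{\rm correct}(\gamma,\varepsilon)$, so for a uniformly random key the number of correctly guessed bits does not exceed $n_{\rm correct}(\gamma,\varepsilon)$ with probability at least $1-\varepsilon$.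
   Context: $\mathbb Z_L=\{0,\ldots,L-1\}$ is the residue ring modulo $L$. For distinct keys $k_1,\ldots,k_s$ and bits $b_1,\ldots,b_s$, $A_{b_1\ldots b_s}(k_1,\ldots,k_s)=\{i\in\mathbb Z_L: a_i(k_1)=b_1,\ldots,a_i(k_s)=b_s\}$. For integers $s\ge1$ and $t$, $P_s(t)=2^{-s}\sum_{u=0}^{t}\binom{s}{u}$ is the cumulative distribution function of a binomial random variable with $s$ trials and success probability $1/2$ ($P_s(t)=0$ for $t<0$). *)

theory Defs
  imports Complex_Main
begin

text \<open>Binary sequences: a k i is the bit a_i(k) for key k and index i in Z_L = {0..<L}.
 A set for distinct keys ks (list of length s) and bits bs.\<close>
definition Aset :: "nat \<Rightarrow> (nat \<Rightarrow> nat \<Rightarrow> bool) \<Rightarrow> nat list \<Rightarrow> bool list \<Rightarrow> nat set" where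
  "Aset L a ks bs = {i \<in> {..<L}. \<forall>t<length ks. a (ks ! t) i = bs ! t}"

definition Pbin :: "nat \<Rightarrow> int \<Rightarrow> real" where
  "Pbin s t = (if t < 0 then 0 else (\<Sum>u\<in>{0..nat t}. real (s choose u)) / 2 ^ s)"

definition ncorr :: "(nat \<Rightarrow> nat \<Rightarrow> bool) \<Rightarrow> nat set \<Rightarrow> (nat \<Rightarrow> bool) \<Rightarrow> nat \<Rightarrow> nat" where
  "ncorr a T g k = card {j \<in> T. g j = a k j}"

end

theory Submission
  imports Defs
begin

text \<open>Fix keys \<open>k\<^sub>1, \<dots>, k\<^sub>s\<close> and let \<open>D\<^sub>j\<close> be the set of keys disagreeing with the guess at position
  \<open>j \<in> T\<close>. Then \<open>\<Sum>\<^sub>i |correct(k\<^sub>i)| = s|T| - \<Sum>\<^sub>j |D\<^sub>j|\<close>. The guess bit and \<open>D\<^sub>j\<close> determine all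
  bits \<open>a\<^sub>j(k\<^sub>i)\<close>, so each value of \<open>D\<^sub>j\<close> is taken at most \<open>2(L/2\<^sup>s + W) = L'/2\<^sup>s\<^sup>-\<^sup>1\<close> times.
  Hence \<open>\<Sum>\<^sub>j |D\<^sub>j|\<close> is smallest when the small disagreement sets are used up first, which
  bounds it from below by \<open>R|T|\<close> minus a binomial correction, \<open>R = r + 1\<close>. Rewriting that
  correction with \<open>(s - d) C(s,d) = s C(s-1,d)\<close> gives the average of the \<open>s\<close> counts, hence their
  minimum, the bound \<open>n\<^sub>c\<^sub>o\<^sub>r\<^sub>r\<^sub>e\<^sub>c\<^sub>t\<close>. If \<open>s\<close> keys exceeded it, their minimum would too.\<close>

definition disagreeing_keys :: "(nat \<Rightarrow> nat \<Rightarrow> bool) \<Rightarrow> nat list \<Rightarrow> (nat \<Rightarrow> bool) \<Rightarrow> nat \<Rightarrow> nat set" where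
  "disagreeing_keys a ks g j = {i. i < length ks \<and> g j \<noteq> a (ks ! i) j}"

lemma ncorr_add_card_disagree:
  assumes "finite T"
  shows "ncorr a T g k + card {j\<in>T. g j \<noteq> a k j} = card T"
proof -
  have "ncorr a T g k + card {j\<in>T. g j \<noteq> a k j} = card ({j\<in>T. g j = a k j} \<union> {j\<in>T. g j \<noteq> a k j})"
    unfolding ncorr_def using assms by (intro card_Un_disjoint[symmetric]) auto
  also have "{j\<in>T. g j = a k j} \<union> {j\<in>T. g j \<noteq> a k j} = T" by auto
  finally show ?thesis .
qed

lemma sum_ncorr_add_sum_card_disagreeing:
  assumes "finite T"
  shows "(\<Sum>i<length ks. ncorr a T g (ks ! i)) + (\<Sum>j\<in>T. card (disagreeing_keys a ks g j))
         = length ks * card T"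
proof -
  have "(\<Sum>j\<in>T. card (disagreeing_keys a ks g j))
      = (\<Sum>j\<in>T. \<Sum>i<length ks. if g j \<noteq> a (ks ! i) j then 1 else 0)"
    unfolding disagreeing_keys_def
    by (intro sum.cong refl) (simp add: sum.If_cases Collect_conj_eq lessThan_def Int_commute)
  also have "\<dots> = (\<Sum>i<length ks. \<Sum>j\<in>T. if g j \<noteq> a (ks ! i) j then 1 else 0)"
    by (rule sum.swap)
  also have "\<dots> = (\<Sum>i<length ks. card {j\<in>T. g j \<noteq> a (ks ! i) j})"
    using assms by (simp add: sum.If_cases Collect_conj_eq Int_commute)
  finally show ?thesis
    using ncorr_add_card_disagree[OF assms] by (simp add: sum.distrib[symmetric])
qed

lemma card_fibre_disagreeing_keys_le:
  fixes W :: real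
  assumes Abound: "\<And>ks bs. length ks = s \<Longrightarrow> distinct ks \<Longrightarrow> set ks \<subseteq> {..<L} \<Longrightarrow>
                   length bs = s \<Longrightarrow> real (card (Aset L a ks bs)) \<le> real L / 2 ^ s + W"
    and ks: "length ks = s" "distinct ks" "set ks \<subseteq> {..<L}" and T: "T \<subseteq> {..<L}"
  shows "real (card {j\<in>T. disagreeing_keys a ks g j = D}) \<le> 2 * (real L / 2 ^ s + W)"
proof -
  define A where "A b = Aset L a ks (map (\<lambda>i. (i \<in> D) \<noteq> b) [0..<s])" for b
  have "{j\<in>T. disagreeing_keys a ks g j = D} \<subseteq> A True \<union> A False"
  proof
    fix j assume "j \<in> {j\<in>T. disagreeing_keys a ks g j = D}"
    then have "j \<in> T" and "\<And>i. i < s \<Longrightarrow> (i \<in> D) = (g j \<noteq> a (ks ! i) j)"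
      using ks(1) by (auto simp: disagreeing_keys_def)
    then have "j \<in> A (g j)" using T ks(1) by (auto simp: A_def Aset_def)
    then show "j \<in> A True \<union> A False" by (cases "g j") auto
  qed
  moreover have "finite (A b)" for b by (simp add: A_def Aset_def)
  ultimately have "card {j\<in>T. disagreeing_keys a ks g j = D} \<le> card (A True) + card (A False)"
    by (meson card_Un_le card_mono finite_UnI order_trans)
  then show ?thesis
    using Abound[OF ks, of "map (\<lambda>i. (i \<in> D) \<noteq> True) [0..<s]"]
      Abound[OF ks, of "map (\<lambda>i. (i \<in> D) \<noteq> False) [0..<s]"]
    unfolding A_def by simp
qed

text \<open>\<open>|D| \<ge> R - (R - |D|)\<^sup>+\<close>, and the correction term is largest when each subset of size \<open>d < R\<close>
  occurs \<open>c\<close> times.\<close>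
lemma sum_card_ge_of_card_fibres_le:
  fixes dis :: "'a \<Rightarrow> nat set" and c :: real
  assumes "finite T" and "R \<le> s" and dis: "\<And>j. j \<in> T \<Longrightarrow> dis j \<subseteq> {..<s}"
    and fibre: "\<And>D. D \<subseteq> {..<s} \<Longrightarrow> real (card {j\<in>T. dis j = D}) \<le> c"
  shows "real R * real (card T) - c * (\<Sum>d<R. real (s choose d) * (real R - real d))
         \<le> (\<Sum>j\<in>T. real (card (dis j)))"
proof -
  define h where "h d = max 0 (real R - real d)" for d :: nat
  have "(\<Sum>j\<in>T. h (card (dis j))) = (\<Sum>D\<in>Pow {..<s}. \<Sum>j\<in>{j\<in>T. dis j = D}. h (card (dis j)))"
    using assms(1) dis by (intro sum.group[symmetric]) auto
  also have "\<dots> = (\<Sum>D\<in>Pow {..<s}. real (card {j\<in>T. dis j = D}) * h (card D))"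
    by simp
  also have "\<dots> \<le> (\<Sum>D\<in>Pow {..<s}. c * h (card D))"
    by (intro sum_mono mult_right_mono fibre) (auto simp: h_def)
  also have "\<dots> = c * (\<Sum>D\<in>Pow {..<s}. h (card D))"
    by (simp add: sum_distrib_left)
  also have "(\<Sum>D\<in>Pow {..<s}. h (card D)) = (\<Sum>d\<le>s. \<Sum>D\<in>{D\<in>Pow {..<s}. card D = d}. h (card D))"
    by (intro sum.group[symmetric]) (auto intro: card_mono[of "{..<s}", simplified])
  also have "\<dots> = (\<Sum>d\<le>s. real (s choose d) * h d)"
    using n_subsets[of "{..<s}"] by (intro sum.cong refl) simp
  also have "\<dots> = (\<Sum>d<R. real (s choose d) * h d)"
    using \<open>R \<le> s\<close> by (intro sum.mono_neutral_right) (auto simp: h_def)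
  also have "\<dots> = (\<Sum>d<R. real (s choose d) * (real R - real d))"
    by (intro sum.cong refl) (auto simp: h_def)
  finally have "(\<Sum>j\<in>T. h (card (dis j))) \<le> c * (\<Sum>d<R. real (s choose d) * (real R - real d))" .
  moreover have "(\<Sum>j\<in>T. real R - h (card (dis j))) \<le> (\<Sum>j\<in>T. real (card (dis j)))"
    by (intro sum_mono) (simp add: h_def)
  ultimately show ?thesis by (simp add: sum_subtractf mult.commute)
qed

lemma Pbin_eq_sum_lessThan:
  "Pbin s (int R - 1) = (\<Sum>d<R. real (s choose d)) / 2 ^ s"
proof (cases R)
  case (Suc R')
  then have "{0..nat (int R - 1)} = {..<R}" by auto
  then show ?thesis by (simp add: Pbin_def)
qed (simp add: Pbin_def)

lemma Pbin_eq_1: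
  assumes "int s \<le> r"
  shows "Pbin s r = 1"
proof -
  have "(\<Sum>u\<in>{0..nat r}. real (s choose u)) = (\<Sum>u\<le>s. real (s choose u))"
    using assms by (intro sum.mono_neutral_right) auto
  also have "\<dots> = 2 ^ s"
    using choose_row_sum[of s] by (metis of_nat_numeral of_nat_power of_nat_sum)
  finally show ?thesis using assms by (simp add: Pbin_def)
qed

lemma Pbin_bracket_index:
  assumes "Pbin s r \<le> x" "x < Pbin s (r + 1)" "0 \<le> x" "x < 1"
  obtains R where "r = int R - 1" "R \<le> s"
proof -
  have "-1 \<le> r"
  proof (rule ccontr)
    assume "\<not> -1 \<le> r"
    then have "Pbin s (r + 1) = 0" by (simp add: Pbin_def)
    with assms(2,3) show False by simp
  qed
  moreover have "r < int s"
    using assms(1,4) Pbin_eq_1[of s r] by fastforce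
  ultimately show ?thesis
    by (intro that[of "nat (r + 1)"]) auto
qed

lemma sum_binomial_mult_diff:
  assumes "R \<le> s"
  shows "(\<Sum>d<R. real (s choose d) * (real R - real d))
      = real s * (\<Sum>d<R. real ((s - 1) choose d)) - real (s - R) * (\<Sum>d<R. real (s choose d))"
proof -
  have "real (s choose d) * (real R - real d)
      = real s * real ((s - 1) choose d) - real (s - R) * real (s choose d)" if "d < R" for d
  proof -
    have "real ((s - d) * (s choose d)) = real (s * ((s - 1) choose d))"
      by (simp only: binomial_absorb_comp)
    then show ?thesis using that assms by (simp add: of_nat_diff algebra_simps)
  qed
  then show ?thesis by (simp add: sum_subtractf sum_distrib_left)
qed

lemma sum_ncorr_le:
  fixes W :: real
  assumes Abound: "\<And>ks bs. length ks = s \<Longrightarrow> distinct ks \<Longrightarrow> set ks \<subseteq> {..<L} \<Longrightarrow>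
                   length bs = s \<Longrightarrow> real (card (Aset L a ks bs)) \<le> real L / 2 ^ s + W"
    and ks: "length ks = s" "distinct ks" "set ks \<subseteq> {..<L}" and T: "T \<subseteq> {..<L}"
    and "R \<le> s" "0 < s"
  shows "real (\<Sum>i<s. ncorr a T g (ks ! i))
         \<le> real (s - R) * real (card T)
           + (real L + 2 ^ s * W) * (real s * Pbin (s - 1) (int R - 1) - 2 * real (s - R) * Pbin s (int R - 1))"
proof -
  have "finite T" using T finite_subset by blast
  define c where "c = 2 * (real L / 2 ^ s + W)"
  have pow: "(2::real) ^ s = 2 * 2 ^ (s - 1)" using \<open>0 < s\<close> by (cases s) auto
  have "real R * real (card T) - c * (\<Sum>d<R. real (s choose d) * (real R - real d))
        \<le> (\<Sum>j\<in>T. real (card (disagreeing_keys a ks g j)))"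
    using \<open>finite T\<close> \<open>R \<le> s\<close>
  proof (rule sum_card_ge_of_card_fibres_le)
    show "disagreeing_keys a ks g j \<subseteq> {..<s}" for j
      using ks(1) by (auto simp: disagreeing_keys_def)
    show "real (card {j\<in>T. disagreeing_keys a ks g j = D}) \<le> c" for D
      unfolding c_def by (rule card_fibre_disagreeing_keys_le[OF Abound ks T])
  qed
  moreover have "real (\<Sum>i<s. ncorr a T g (ks ! i)) + (\<Sum>j\<in>T. real (card (disagreeing_keys a ks g j)))
                 = real s * real (card T)"
    using arg_cong[OF sum_ncorr_add_sum_card_disagreeing[OF \<open>finite T\<close>, where ks=ks and a=a and g=g], of real] ks(1)
    by simp
  moreover have "c * (\<Sum>d<R. real (s choose d) * (real R - real d))
      = (real L + 2 ^ s * W) * (real s * Pbin (s - 1) (int R - 1) - 2 * real (s - R) * Pbin s (int R - 1))"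
    unfolding sum_binomial_mult_diff[OF \<open>R \<le> s\<close>] Pbin_eq_sum_lessThan c_def pow
    by (simp add: field_simps)
  ultimately show ?thesis
    using \<open>R \<le> s\<close> by (simp add: of_nat_diff algebra_simps)
qed

lemma mult_Min_le_sum:
  fixes f :: "nat \<Rightarrow> nat"
  shows "s * Min (f ` {..<s}) \<le> (\<Sum>i<s. f i)"
proof -
  have "(\<Sum>i<s. Min (f ` {..<s})) \<le> (\<Sum>i<s. f i)" by (intro sum_mono) simp
  then show ?thesis by simp
qed

lemma card_greater_less_of_Min_le:
  fixes f :: "nat \<Rightarrow> nat" and t :: real
  assumes "0 < s"
    and Min_le: "\<And>ks. length ks = s \<Longrightarrow> distinct ks \<Longrightarrow> set ks \<subseteq> {..<L} \<Longrightarrow>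
                   real (Min ((\<lambda>i. f (ks ! i)) ` {..<s})) \<le> t"
  shows "card {k\<in>{..<L}. real (f k) > t} < s"
proof (rule ccontr)
  assume "\<not> ?thesis"
  then obtain Y where Y: "Y \<subseteq> {k\<in>{..<L}. real (f k) > t}" "card Y = s"
    by (metis not_less obtain_subset_with_card_n)
  then have "finite Y" using \<open>0 < s\<close> card_ge_0_finite by blast
  define ks where "ks = sorted_list_of_set Y"
  have ks: "length ks = s" "distinct ks" "set ks = Y"
    unfolding ks_def using \<open>finite Y\<close> Y(2) by auto
  have "Min ((\<lambda>i. f (ks ! i)) ` {..<s}) \<in> (\<lambda>i. f (ks ! i)) ` {..<s}"
    using \<open>0 < s\<close> by (intro Min_in) auto
  then obtain i where "i < s" "Min ((\<lambda>i. f (ks ! i)) ` {..<s}) = f (ks ! i)" by auto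
  moreover have "ks ! i \<in> Y" using \<open>i < s\<close> ks by auto
  ultimately show False
    using Min_le[OF ks(1,2)] ks(3) Y(1) by fastforce
qed

lemma fraction_at_most_ge:
  fixes f :: "nat \<Rightarrow> nat" and t :: real
  assumes "0 < L" and "card {k\<in>{..<L}. real (f k) > t} < s"
  shows "1 - real s / real L \<le> real (card {k\<in>{..<L}. real (f k) \<le> t}) / real L"
proof -
  have "card {k\<in>{..<L}. real (f k) \<le> t} + card {k\<in>{..<L}. real (f k) > t}
        = card ({k\<in>{..<L}. real (f k) \<le> t} \<union> {k\<in>{..<L}. real (f k) > t})"
    by (intro card_Un_disjoint[symmetric]) auto
  also have "{k\<in>{..<L}. real (f k) \<le> t} \<union> {k\<in>{..<L}. real (f k) > t} = {..<L}" by auto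
  finally have "real L - real s \<le> real (card {k\<in>{..<L}. real (f k) \<le> t})"
    using assms(2) by simp
  then have "(real L - real s) / real L \<le> real (card {k\<in>{..<L}. real (f k) \<le> t}) / real L"
    by (simp add: divide_right_mono)
  then show ?thesis using assms(1) by (simp add: diff_divide_distrib)
qed

theorem corollary1:
  fixes L s :: nat and a :: "nat \<Rightarrow> nat \<Rightarrow> bool" and W \<gamma> :: real and r :: int
  assumes L_pos: "L > 0"
    and s_ge: "s \<ge> 2"
    and W_nonneg: "W \<ge> 0"
    and Abound: "\<And>ks bs. length ks = s \<Longrightarrow> distinct ks \<Longrightarrow> set ks \<subseteq> {..<L} \<Longrightarrow>
                   length bs = s \<Longrightarrow> real (card (Aset L a ks bs)) \<le> real L / 2 ^ s + W"
    and gamma: "0 < \<gamma>" "\<gamma> < 1"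
    and gammaL_int: "\<exists>m::nat. \<gamma> * real L = real m"
    and r_def: "Pbin s r \<le> (\<gamma> / (1 + 2 ^ s * W / real L)) / 2"
               "(\<gamma> / (1 + 2 ^ s * W / real L)) / 2 < Pbin s (r + 1)"
  shows "let L' = real L + 2 ^ s * W;
             \<gamma>' = \<gamma> / (1 + 2 ^ s * W / real L);
             nc = L' * (Pbin (s - 1) r + real_of_int (int s - r - 1) / real s * (\<gamma>' - 2 * Pbin s r))
         in \<forall>T g. T \<subseteq> {..<L} \<longrightarrow> real (card T) = \<gamma> * real L \<longrightarrow>
              (\<forall>ks. length ks = s \<longrightarrow> distinct ks \<longrightarrow> set ks \<subseteq> {..<L} \<longrightarrow>
                  real (Min ((\<lambda>i. ncorr a T g (ks ! i)) ` {..<s})) \<le> nc)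
            \<and> card {k \<in> {..<L}. real (ncorr a T g k) > nc} < s
            \<and> real (card {k \<in> {..<L}. real (ncorr a T g k) \<le> nc}) / real L \<ge> 1 - real s / real L"
proof -
  \<comment> \<open>The bound holds for every \<open>T\<close> of size \<open>\<gamma>L\<close>.\<close>
  define L' where "L' = real L + 2 ^ s * W"
  define \<gamma>' where "\<gamma>' = \<gamma> / (1 + 2 ^ s * W / real L)"
  define nc where "nc = L' * (Pbin (s - 1) r + real_of_int (int s - r - 1) / real s * (\<gamma>' - 2 * Pbin s r))"
  have s_pos: "0 < s" using s_ge by simp
  have scale_ge_1: "1 \<le> 1 + 2 ^ s * W / real L" using W_nonneg by simp
  then have \<gamma>'L': "\<gamma>' * L' = \<gamma> * real L" and "0 < \<gamma>'"
    using L_pos gamma by (auto simp: \<gamma>'_def L'_def field_simps)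
  have "\<gamma>' \<le> \<gamma>" unfolding \<gamma>'_def using scale_ge_1 gamma by (simp add: divide_le_eq mult_le_cancel_left1)
  then have "\<gamma>' < 1" using gamma by simp
  obtain R where R: "r = int R - 1" "R \<le> s"
    by (rule Pbin_bracket_index[OF r_def[folded \<gamma>'_def]]) (use \<open>0 < \<gamma>'\<close> \<open>\<gamma>' < 1\<close> in auto)
  have nc: "real s * nc = real (s - R) * (\<gamma> * real L)
              + L' * (real s * Pbin (s - 1) r - 2 * real (s - R) * Pbin s r)"
  proof -
    define q where "q = real_of_int (int s - r - 1) / real s"
    have "real (s - R) = real s * q" using R s_ge by (simp add: q_def of_nat_diff)
    then show ?thesis unfolding nc_def q_def[symmetric] \<gamma>'L'[symmetric] by (simp add: algebra_simps)
  qed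
  have Min_le: "real (Min ((\<lambda>i. ncorr a T g (ks ! i)) ` {..<s})) \<le> nc"
    if "T \<subseteq> {..<L}" "real (card T) = \<gamma> * real L" "length ks = s" "distinct ks" "set ks \<subseteq> {..<L}"
    for T g ks
  proof -
    have "real s * real (Min ((\<lambda>i. ncorr a T g (ks ! i)) ` {..<s})) \<le> real (\<Sum>i<s. ncorr a T g (ks ! i))"
      using mult_Min_le_sum[of s "\<lambda>i. ncorr a T g (ks ! i)"] by (metis of_nat_le_iff of_nat_mult)
    also have "\<dots> \<le> real s * nc"
      using sum_ncorr_le[OF Abound that(3-5) that(1) R(2) s_pos, of g]
      unfolding nc that(2) L'_def[symmetric] R(1)[symmetric] .
    finally show ?thesis using s_ge by simp
  qed
  have card_greater: "card {k\<in>{..<L}. real (ncorr a T g k) > nc} < s"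
    if "T \<subseteq> {..<L}" "real (card T) = \<gamma> * real L" for T g
    using s_pos Min_le[OF that] by (rule card_greater_less_of_Min_le)
  show ?thesis
    unfolding Let_def L'_def[symmetric] \<gamma>'_def[symmetric] nc_def[symmetric]
    using Min_le card_greater fraction_at_most_ge[OF L_pos card_greater] by simp
qed

end
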